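(* Let $m,n\ge1$ and let $\lambda\subseteq\nu\subseteq(n-1)^{m-1}$ be partitions. Then the polytope $\mathrm{PASM}(\nu/\lambda,m,n)$ is integrally equivalent to the order polytope $\mathcal{O}(P(\nu/\lambda))$.
   Context: A partition $\mu=(\mu_1\ge\mu_2\ge\cdots)$ is a weakly decreasing sequence of nonnegative integers with finitely many nonzero terms, identified with the set of positions $\{(i,j):i\ge1,1\le j\le\mu_i\}$; $\mu\subseteq\nu$ means $\mu_i\le\nu_i$ for all $i$, and $\mu\subseteq a^b$ means $\mu$ has at most $b$ positive parts and $\mu_1\le a$. For $\mu\subseteq(n-1)^{m-1}$, the $m\times n$ matrix $M^\mu$ has entries $M^\mu_{1,\mu_1+1}=1$; for each $1\le k\le m-1$ with $\mu_k>\mu_{k+1}$, $M^\mu_{k+1,\mu_{k+1}+1}=1$ and $M^\mu_{k+1,\mu_k+1}=-1$; all other entries $0$. $\mathrm{PASM}(\nu/\lambda,m,n)$ is the convex hull in $\mathbb{R}^{mn}$ of $\{M^\mu:\lambda\subseteq\mu\subseteq\nu\}$. $P(\nu/\lambda)$ is the poset whose elements are the positions $(i,j)$ in $\nu$ but not in $\lambda$, with $(i,j)\le(i',j')$ iff $i\le i'$ and $j\le j'$. For a finite poset $P$, $\mathcal{O}(P)\subseteq\mathbb{R}^P$ is the set of $f:P\to\mathbb{R}$ with $0\le f(p)\le 1$ for all $p$ and $f(p)\le f(q)$ whenever $p\le q$. Integer polytopes $\mathcal{P}\subset\mathbb{R}^d$, $\mathcal{Q}\subset\mathbb{R}^r$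 are integrally equivalent if there is an affine map $f:\mathbb{R}^d\to\mathbb{R}^r$ mapping $\mathcal{P}$ bijectively onto $\mathcal{Q}$ and $\mathbb{Z}^d\cap\mathrm{aff}(\mathcal{P})$ bijectively onto $\mathbb{Z}^r\cap\mathrm{aff}(\mathcal{Q})$, where $\mathrm{aff}$ is affine span. *)

theory Defs
  imports Complex_Main
begin

text \<open>A partition is a function mu :: nat => nat, with parts mu 1 >= mu 2 >= ...;
  index 0 is unused and normalised to 0.\<close>

definition is_partition :: "(nat \<Rightarrow> nat) \<Rightarrow> bool" where
  "is_partition \<mu> \<longleftrightarrow> \<mu> 0 = 0 \<and> (\<forall>i\<ge>1. \<mu> (Suc i) \<le> \<mu> i) \<and> finite {i. \<mu> i \<noteq> 0}"

definition part_le :: "(nat \<Rightarrow> nat) \<Rightarrow> (nat \<Rightarrow> nat) \<Rightarrow> bool" where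
  "part_le \<mu> \<nu> \<longleftrightarrow> (\<forall>i\<ge>1. \<mu> i \<le> \<nu> i)"

definition in_box :: "(nat \<Rightarrow> nat) \<Rightarrow> nat \<Rightarrow> nat \<Rightarrow> bool" where
  "in_box \<mu> a b \<longleftrightarrow> (\<forall>i\<ge>1. \<mu> i \<le> a) \<and> (\<forall>i>b. \<mu> i = 0)"

definition skew_cells :: "(nat \<Rightarrow> nat) \<Rightarrow> (nat \<Rightarrow> nat) \<Rightarrow> (nat \<times> nat) set" where
  "skew_cells \<nu> la = {(i, j). i \<ge> 1 \<and> 1 \<le> j \<and> j \<le> \<nu> i \<and> \<not> (j \<le> la i)}"

text \<open>The poset P(nu/lambda) carries the componentwise order on positions.\<close>
definition pos_le :: "nat \<times> nat \<Rightarrow> nat \<times> nat \<Rightarrow> bool" where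
  "pos_le p q \<longleftrightarrow> fst p \<le> fst q \<and> snd p \<le> snd q"

definition RI :: "'i set \<Rightarrow> ('i \<Rightarrow> real) set" where
  "RI I = {x. \<forall>p. p \<notin> I \<longrightarrow> x p = 0}"

definition ZI :: "'i set \<Rightarrow> ('i \<Rightarrow> real) set" where
  "ZI I = {x \<in> RI I. \<forall>p. x p \<in> \<int>}"

definition conv_hull :: "('i \<Rightarrow> real) set \<Rightarrow> ('i \<Rightarrow> real) set" where
  "conv_hull S = {x. \<exists>F c. finite F \<and> F \<subseteq> S \<and> (\<forall>v\<in>F. c v \<ge> 0) \<and> sum c F = 1 \<and>
                        x = (\<lambda>p. \<Sum>v\<in>F. c v * v p)}"

definition aff_hull :: "('i \<Rightarrow> real) set \<Rightarrow> ('i \<Rightarrow> real) set" where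
  "aff_hull S = {x. \<exists>F c. finite F \<and> F \<subseteq> S \<and> sum c F = 1 \<and>
                        x = (\<lambda>p. \<Sum>v\<in>F. c v * v p)}"

definition affine_map :: "'i set \<Rightarrow> 'j set \<Rightarrow> (('i \<Rightarrow> real) \<Rightarrow> ('j \<Rightarrow> real)) \<Rightarrow> bool" where
  "affine_map I J f \<longleftrightarrow> (\<forall>x\<in>RI I. f x \<in> RI J) \<and>
     (\<forall>x\<in>RI I. \<forall>y\<in>RI I. \<forall>t::real.
        f (\<lambda>p. t * x p + (1 - t) * y p) = (\<lambda>q. t * f x q + (1 - t) * f y q))"

definition integrally_equivalent ::
  "'i set \<Rightarrow> ('i \<Rightarrow> real) set \<Rightarrow> 'j set \<Rightarrow> ('j \<Rightarrow> real) set \<Rightarrow> bool" where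
  "integrally_equivalent I P J Q \<longleftrightarrow>
     (\<exists>f. affine_map I J f \<and> bij_betw f P Q \<and>
          bij_betw f (ZI I \<inter> aff_hull P) (ZI J \<inter> aff_hull Q))"

definition Mmat :: "(nat \<Rightarrow> nat) \<Rightarrow> nat \<Rightarrow> nat \<Rightarrow> (nat \<times> nat \<Rightarrow> real)" where
  "Mmat \<mu> m n = (\<lambda>(i, j).
     if 1 \<le> i \<and> i \<le> m \<and> 1 \<le> j \<and> j \<le> n then
       (if i = 1 \<and> j = \<mu> 1 + 1 then 1
        else if 2 \<le> i \<and> \<mu> (i - 1) > \<mu> i \<and> j = \<mu> i + 1 then 1
        else if 2 \<le> i \<and> \<mu> (i - 1) > \<mu> i \<and> j = \<mu> (i - 1) + 1 then -1
        else 0)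
     else 0)"

definition PASM :: "(nat \<Rightarrow> nat) \<Rightarrow> (nat \<Rightarrow> nat) \<Rightarrow> nat \<Rightarrow> nat \<Rightarrow> (nat \<times> nat \<Rightarrow> real) set" where
  "PASM \<nu> la m n = conv_hull {Mmat \<mu> m n | \<mu>. is_partition \<mu> \<and> part_le la \<mu> \<and> part_le \<mu> \<nu>}"

definition order_polytope :: "'a set \<Rightarrow> ('a \<Rightarrow> 'a \<Rightarrow> bool) \<Rightarrow> ('a \<Rightarrow> real) set" where
  "order_polytope P le = {f \<in> RI P. (\<forall>p\<in>P. 0 \<le> f p \<and> f p \<le> 1) \<and>
                                    (\<forall>p\<in>P. \<forall>q\<in>P. le p q \<longrightarrow> f p \<le> f q)}"

end

theory Submission
  imports Defs "HOL-Analysis.Analysis" "HOL-Library.Function_Algebras"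
begin

(* The equivalence is the linear map sending a matrix x to its corner sums
   S x (i, j) = sum of x (i', j') over i' <= i, j' <= j, read off on the cells of nu/lambda.
   Down to row i, the columns of M^mu sum to the unit vector at column mu_i + 1, so the corner
   sums of M^mu are [mu_i < j]: M^mu goes to the indicator of the cells of nu/mu. These are
   exactly the indicators of the upsets of P(nu/lambda), whose convex hull is the order polytope.
   At a cell outside nu/lambda every vertex, hence every point of the affine hull, has the same
   corner sum as for lambda; so by inclusion-exclusion a point of the affine hull, and whether it
   is integral, is recovered from its image. *)

instantiation "fun" :: (type, real_vector) real_vector
begin

definition scaleR_fun :: "real \<Rightarrow> ('a \<Rightarrow> 'b) \<Rightarrow> 'a \<Rightarrow> 'b" where
  "scaleR_fun r f = (\<lambda>x. r *\<^sub>R f x)"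

instance
  by standard (simp_all add: scaleR_fun_def fun_eq_iff scaleR_add_right scaleR_add_left)

end

lemma scaleR_fun_apply [simp]: "(r *\<^sub>R f) x = r *\<^sub>R f x"
  by (simp add: scaleR_fun_def)

lemma sum_fun_apply: "(\<Sum>v\<in>F. g v) x = (\<Sum>v\<in>F. g v x)"
  by (induction F rule: infinite_finite_induct) simp_all

lemma sum_scaleR_fun: "(\<Sum>v\<in>F. c v *\<^sub>R v) = (\<lambda>p. \<Sum>v\<in>F. c v * v p)"
  by (simp add: fun_eq_iff sum_fun_apply)

lemma conv_hull_eq_convex_hull: "conv_hull S = convex hull S"
  unfolding conv_hull_def convex_hull_explicit sum_scaleR_fun
  by (rule Collect_cong) (simp only: eq_commute)

lemma aff_hull_eq_affine_hull: "aff_hull S = affine hull S"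
  unfolding aff_hull_def affine_hull_explicit sum_scaleR_fun
  by (rule Collect_cong) (metis (lifting) sum.empty zero_neq_one)

lemma affine_RI: "affine (RI I)"
  unfolding affine_def RI_def by simp

lemma affine_linear_image:
  assumes "linear f" "affine S"
  shows "affine (f ` S)"
proof (unfold affine_def, intro ballI allI impI)
  fix x y u v
  assume "x \<in> f ` S" "y \<in> f ` S" "u + v = (1::real)"
  then obtain a b where ab: "a \<in> S" "b \<in> S" "x = f a" "y = f b"
    by auto
  have "u *\<^sub>R x + v *\<^sub>R y = f (u *\<^sub>R a + v *\<^sub>R b)"
    using assms(1) ab by (simp add: linear_iff)
  moreover have "u *\<^sub>R a + v *\<^sub>R b \<in> S"
    using assms(2) ab \<open>u + v = 1\<close> unfolding affine_def by blast
  ultimately show "u *\<^sub>R x + v *\<^sub>R y \<in> f ` S"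
    by simp
qed

lemma affine_linear_vimage:
  assumes "linear f" "affine S"
  shows "affine (f -` S)"
  using assms unfolding affine_def linear_iff by simp

lemma linear_image_affine_hull:
  assumes "linear f"
  shows "f ` (affine hull S) = affine hull (f ` S)"
proof
  have "affine hull S \<subseteq> f -` (affine hull (f ` S))"
  proof (rule hull_minimal)
    show "S \<subseteq> f -` (affine hull (f ` S))"
      by (auto intro: hull_inc)
    show "affine (f -` (affine hull (f ` S)))"
      by (rule affine_linear_vimage[OF assms affine_affine_hull])
  qed
  then show "f ` (affine hull S) \<subseteq> affine hull (f ` S)"
    by (simp add: image_subset_iff_subset_vimage)
  show "affine hull (f ` S) \<subseteq> f ` (affine hull S)"
  proof (rule hull_minimal)
    show "f ` S \<subseteq> f ` (affine hull S)"
      by (rule image_mono[OF hull_subset])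
    show "affine (f ` (affine hull S))"
      by (rule affine_linear_image[OF assms affine_affine_hull])
  qed
qed

lemma linear_imp_affine_map:
  assumes lin: "linear f" and into: "\<And>x. f x \<in> RI J"
  shows "affine_map I J f"
proof -
  have "f (\<lambda>p. t * x p + (1 - t) * y p) = (\<lambda>q. t * f x q + (1 - t) * f y q)"
    for x y and t :: real
  proof -
    have "(\<lambda>p. t * x p + (1 - t) * y p) = t *\<^sub>R x + (1 - t) *\<^sub>R y"
      by (simp add: fun_eq_iff)
    then have "f (\<lambda>p. t * x p + (1 - t) * y p) = t *\<^sub>R f x + (1 - t) *\<^sub>R f y"
      using lin by (simp add: linear_iff)
    then show ?thesis
      by (simp add: fun_eq_iff)
  qed
  then show ?thesis
    using into unfolding affine_map_def by blast
qed

lemma integrally_equivalentI: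
  assumes lin: "linear f" and into: "\<And>x. f x \<in> RI J"
    and inj: "inj_on f (aff_hull P)" and img: "f ` P = Q"
    and Ints: "\<And>x. x \<in> aff_hull P \<Longrightarrow> x \<in> ZI I \<longleftrightarrow> f x \<in> ZI J"
  shows "integrally_equivalent I P J Q"
proof -
  have affine_map: "affine_map I J f"
    using lin into by (rule linear_imp_affine_map)
  have bij: "bij_betw f P Q"
    using inj img hull_subset[of P affine] unfolding aff_hull_eq_affine_hull
    by (simp add: bij_betw_def inj_on_subset)
  have aff: "f ` aff_hull P = aff_hull Q"
    using linear_image_affine_hull[OF lin, of P] img unfolding aff_hull_eq_affine_hull by simp
  have "f ` (ZI I \<inter> aff_hull P) = ZI J \<inter> aff_hull Q"
  proof
    show "f ` (ZI I \<inter> aff_hull P) \<subseteq> ZI J \<inter> aff_hull Q"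
      using Ints aff by auto
    show "ZI J \<inter> aff_hull Q \<subseteq> f ` (ZI I \<inter> aff_hull P)"
    proof
      fix y assume y: "y \<in> ZI J \<inter> aff_hull Q"
      then obtain x where "x \<in> aff_hull P" "y = f x"
        using aff by blast
      then show "y \<in> f ` (ZI I \<inter> aff_hull P)"
        using Ints y by auto
    qed
  qed
  then have "bij_betw f (ZI I \<inter> aff_hull P) (ZI J \<inter> aff_hull Q)"
    using inj by (simp add: bij_betw_def inj_on_subset)
  with affine_map bij show ?thesis
    unfolding integrally_equivalent_def by (intro exI[of _ f] conjI)
qed

section \<open>Order polytopes\<close>

definition upset :: "'a set \<Rightarrow> ('a \<Rightarrow> 'a \<Rightarrow> bool) \<Rightarrow> 'a set \<Rightarrow> bool" where
  "upset Q le U \<longleftrightarrow> U \<subseteq> Q \<and> (\<forall>p\<in>U. \<forall>q\<in>Q. le p q \<longrightarrow> q \<in> U)"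

lemma convex_order_polytope: "convex (order_polytope Q le)"
proof (unfold convex_def, intro ballI allI impI)
  fix x y and u v :: real
  assume x: "x \<in> order_polytope Q le" and y: "y \<in> order_polytope Q le"
    and uv: "0 \<le> u" "0 \<le> v" "u + v = 1"
  let ?z = "u *\<^sub>R x + v *\<^sub>R y"
  have "?z \<in> RI Q"
    using x y unfolding order_polytope_def RI_def by simp
  moreover have "0 \<le> ?z p \<and> ?z p \<le> 1" if "p \<in> Q" for p
  proof -
    have "0 \<le> x p" "x p \<le> 1" "0 \<le> y p" "y p \<le> 1"
      using x y that unfolding order_polytope_def by auto
    then have "u * x p + v * y p \<le> u * 1 + v * 1"
      using uv by (intro add_mono mult_left_mono) auto
    then show ?thesis
      using uv \<open>0 \<le> x p\<close> \<open>0 \<le> y p\<close> by simp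
  qed
  moreover have "?z p \<le> ?z q" if "p \<in> Q" "q \<in> Q" "le p q" for p q
  proof -
    have "x p \<le> x q" "y p \<le> y q"
      using x y that unfolding order_polytope_def by auto
    then show ?thesis
      using uv by (simp add: add_mono mult_left_mono)
  qed
  ultimately show "?z \<in> order_polytope Q le"
    unfolding order_polytope_def by blast
qed

lemma indicator_in_order_polytope:
  "upset Q le U \<Longrightarrow> indicator U \<in> order_polytope Q le"
  unfolding upset_def order_polytope_def RI_def indicator_def by auto

lemma upset_positive_part:
  assumes "x \<in> order_polytope Q le"
  shows "upset Q le {p. 0 < x p}"
proof -
  have "{p. 0 < x p} \<subseteq> Q"
    using assms unfolding order_polytope_def RI_def by force
  moreover have "0 < x q" if "p \<in> Q" "q \<in> Q" "le p q" "0 < x p" for p q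
    using assms that unfolding order_polytope_def by force
  ultimately show ?thesis
    unfolding upset_def by blast
qed

lemma order_polytope_decompose:
  assumes x: "x \<in> order_polytope Q le" and "a < 1"
    and a_le: "\<And>p. 0 < x p \<Longrightarrow> a \<le> x p"
  defines "y \<equiv> \<lambda>p. if 0 < x p then (x p - a) / (1 - a) else 0"
  shows "y \<in> order_polytope Q le"
    and "x = a *\<^sub>R indicator {p. 0 < x p} + (1 - a) *\<^sub>R y"
proof -
  have x_RI: "x \<in> RI Q" and x_01: "\<And>p. p \<in> Q \<Longrightarrow> 0 \<le> x p \<and> x p \<le> 1"
    and x_mono: "\<And>p q. p \<in> Q \<Longrightarrow> q \<in> Q \<Longrightarrow> le p q \<Longrightarrow> x p \<le> x q"
    using x unfolding order_polytope_def by auto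
  have "y \<in> RI Q"
    using x_RI unfolding y_def RI_def by auto
  moreover have "0 \<le> y p \<and> y p \<le> 1" if "p \<in> Q" for p
    using x_01[OF that] a_le[of p] \<open>a < 1\<close> unfolding y_def by (auto simp: field_simps)
  moreover have "y p \<le> y q" if "p \<in> Q" "q \<in> Q" "le p q" for p q
    using x_mono[OF that] x_01[OF that(2)] a_le[of q] \<open>a < 1\<close> unfolding y_def
    by (auto simp: divide_right_mono)
  ultimately show "y \<in> order_polytope Q le"
    unfolding order_polytope_def by blast
  have "x p = 0" if "\<not> 0 < x p" for p
    using that x_01[of p] x_RI unfolding RI_def by (cases "p \<in> Q") auto
  then show "x = a *\<^sub>R indicator {p. 0 < x p} + (1 - a) *\<^sub>R y"
    using \<open>a < 1\<close> unfolding y_def by (auto simp: fun_eq_iff indicator_def)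
qed

lemma order_polytope_min_positive_value:
  assumes x: "x \<in> order_polytope Q le" and "finite Q" and "x \<noteq> indicator {p. 0 < x p}"
  obtains a where "a \<in> x ` Q - {0}" "0 \<le> a" "a < 1" "\<And>q. 0 < x q \<Longrightarrow> a \<le> x q"
proof -
  let ?V = "x ` Q - {0}"
  have x_01: "\<And>p. p \<in> Q \<Longrightarrow> 0 \<le> x p \<and> x p \<le> 1" and x_RI: "x \<in> RI Q"
    using x unfolding order_polytope_def by auto
  have fin: "finite ?V"
    using assms(2) by simp
  obtain p where p: "x p \<noteq> indicator {p. 0 < x p} p"
    using assms(3) by (auto simp: fun_eq_iff)
  have "p \<in> Q"
    using p x_RI unfolding RI_def by (auto simp: indicator_def)
  then have "0 < x p"
    using p x_01[of p] by (cases "0 < x p") (auto simp: indicator_def)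
  then have "x p < 1"
    using p x_01[OF \<open>p \<in> Q\<close>] by (simp add: indicator_def less_le)
  have "x p \<in> ?V"
    using \<open>p \<in> Q\<close> \<open>0 < x p\<close> by auto
  show ?thesis
  proof
    show "Min ?V \<in> ?V"
      using fin \<open>x p \<in> ?V\<close> by (intro Min_in) auto
    then show "0 \<le> Min ?V"
      using x_01 by auto
    have "Min ?V \<le> x p"
      using fin \<open>x p \<in> ?V\<close> by (rule Min_le)
    with \<open>x p < 1\<close> show "Min ?V < 1"
      by linarith
    fix q assume "0 < x q"
    moreover have "q \<in> Q"
      using \<open>0 < x q\<close> x_RI unfolding RI_def by force
    ultimately show "Min ?V \<le> x q"
      using fin by (intro Min_le) auto
  qed
qed

lemma card_nonzero_values_rescale_less:
  fixes x :: "'a \<Rightarrow> real"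
  assumes "finite Q" "a \<in> x ` Q - {0}"
  defines "y \<equiv> \<lambda>p. if 0 < x p then (x p - a) / (1 - a) else 0"
  shows "card (y ` Q - {0}) < card (x ` Q - {0})"
proof -
  let ?V = "x ` Q - {0}" and ?f = "\<lambda>v. (v - a) / (1 - a)"
  have "y ` Q - {0} \<subseteq> ?f ` (?V - {a})"
  proof
    fix w assume "w \<in> y ` Q - {0}"
    then obtain q where q: "q \<in> Q" "w = y q" "w \<noteq> 0"
      by blast
    then have "0 < x q" "x q \<noteq> a"
      unfolding y_def by (auto split: if_splits)
    with q show "w \<in> ?f ` (?V - {a})"
      by (intro rev_image_eqI[of "x q"]) (auto simp: y_def)
  qed
  then have "card (y ` Q - {0}) \<le> card (?f ` (?V - {a}))"
    using assms(1) by (intro card_mono) auto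
  also have "\<dots> \<le> card (?V - {a})"
    by (rule card_image_le) (use assms(1) in auto)
  also have "\<dots> < card ?V"
    using assms(1,2) by (intro card_Diff1_less) auto
  finally show ?thesis .
qed

lemma order_polytope_subset_convex_hull:
  assumes "finite Q"
  shows "order_polytope Q le \<subseteq> convex hull {indicator U | U. upset Q le U}"
proof
  fix x assume "x \<in> order_polytope Q le"
  then show "x \<in> convex hull {indicator U | U. upset Q le U}"
  proof (induction "card (x ` Q - {0})" arbitrary: x rule: less_induct)
    case less
    let ?H = "convex hull {indicator U | U. upset Q le U}"
    let ?U = "{p. 0 < x p}"
    have indicator_U: "indicator ?U \<in> ?H"
      using upset_positive_part[OF less.prems] by (blast intro: hull_inc)
    show ?case
    proof (cases "x = indicator ?U")
      case True
      show ?thesis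
        by (subst True) (rule indicator_U)
    next
      case False
      then obtain a where a: "a \<in> x ` Q - {0}" "0 \<le> a" "a < 1" "\<And>q. 0 < x q \<Longrightarrow> a \<le> x q"
        using order_polytope_min_positive_value[OF less.prems assms] by blast
      define y where "y = (\<lambda>p. if 0 < x p then (x p - a) / (1 - a) else 0)"
      note split = order_polytope_decompose[OF less.prems a(3,4), folded y_def]
      have "y \<in> ?H"
        using less.hyps split(1) card_nonzero_values_rescale_less[OF assms a(1), folded y_def]
        by blast
      then have "a *\<^sub>R indicator ?U + (1 - a) *\<^sub>R y \<in> ?H"
        using a(2,3) by (intro convexD[OF convex_convex_hull indicator_U]) auto
      then show ?thesis
        by (subst split(2))
    qed
  qed
qed

lemma order_polytope_eq_convex_hull:
  assumes "finite Q"
  shows "order_polytope Q le = convex hull {indicator U | U. upset Q le U}"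
proof
  show "order_polytope Q le \<subseteq> convex hull {indicator U | U. upset Q le U}"
    using assms by (rule order_polytope_subset_convex_hull)
  show "convex hull {indicator U | U. upset Q le U} \<subseteq> order_polytope Q le"
    by (intro hull_minimal convex_order_polytope) (auto intro: indicator_in_order_polytope)
qed

section \<open>Corner sums of a matrix\<close>

definition corner_sum :: "(nat \<times> nat \<Rightarrow> real) \<Rightarrow> nat \<Rightarrow> nat \<Rightarrow> real" where
  "corner_sum x i j = (\<Sum>i'=1..i. \<Sum>j'=1..j. x (i', j'))"

lemma corner_sum_0 [simp]: "corner_sum x 0 j = 0"
  unfolding corner_sum_def by simp

lemma corner_sum_add: "corner_sum (x + y) i j = corner_sum x i j + corner_sum y i j"
  and corner_sum_scaleR: "corner_sum (c *\<^sub>R x) i j = c * corner_sum x i j"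
  unfolding corner_sum_def by (simp_all add: sum.distrib sum_distrib_left)

lemma linear_corner_sum: "linear (\<lambda>x. corner_sum x i j)"
  by (rule linearI) (simp_all add: corner_sum_add corner_sum_scaleR)

lemma corner_sum_Ints: "(\<And>p. x p \<in> \<int>) \<Longrightarrow> corner_sum x i j \<in> \<int>"
  unfolding corner_sum_def by (intro Ints_sum) auto

lemma entry_eq_corner_sums:
  "x (Suc i, Suc j) =
     corner_sum x (Suc i) (Suc j) - corner_sum x i (Suc j) - corner_sum x (Suc i) j + corner_sum x i j"
proof -
  have row: "corner_sum x (Suc i) k = corner_sum x i k + (\<Sum>j'=1..k. x (Suc i, j'))" for k
    unfolding corner_sum_def by (simp add: sum.cl_ivl_Suc)
  show ?thesis
    using row[of "Suc j"] row[of j] by (simp add: sum.cl_ivl_Suc)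
qed

lemma RI_box_eqI:
  assumes "x \<in> RI ({1..m} \<times> {1..n})" "y \<in> RI ({1..m} \<times> {1..n})"
    and "\<And>i j. i \<le> m \<Longrightarrow> j \<le> n \<Longrightarrow> corner_sum x i j = corner_sum y i j"
  shows "x = y"
proof
  fix q :: "nat \<times> nat"
  show "x q = y q"
  proof (cases "q \<in> {1..m} \<times> {1..n}")
    case True
    then obtain i j where "q = (Suc i, Suc j)" "Suc i \<le> m" "Suc j \<le> n"
      by (cases q) (auto dest!: Suc_le_D)
    then show ?thesis
      using assms(3) by (simp add: entry_eq_corner_sums[of x] entry_eq_corner_sums[of y])
  next
    case False
    then have "x q = 0" "y q = 0"
      using assms(1,2) unfolding RI_def by blast+
    then show ?thesis
      by simp
  qed
qed

lemma ZI_boxI: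
  assumes "x \<in> RI ({1..m} \<times> {1..n})"
    and "\<And>i j. i \<le> m \<Longrightarrow> j \<le> n \<Longrightarrow> corner_sum x i j \<in> \<int>"
  shows "x \<in> ZI ({1..m} \<times> {1..n})"
proof -
  have "x q \<in> \<int>" for q
  proof (cases "q \<in> {1..m} \<times> {1..n}")
    case True
    then obtain i j where "q = (Suc i, Suc j)" "Suc i \<le> m" "Suc j \<le> n"
      by (cases q) (auto dest!: Suc_le_D)
    then show ?thesis
      using assms(2) by (simp add: entry_eq_corner_sums[of x] Ints_add Ints_diff)
  next
    case False
    then have "x q = 0"
      using assms(1) unfolding RI_def by blast
    then show ?thesis
      by simp
  qed
  with assms(1) show ?thesis
    unfolding ZI_def by blast
qed

definition corner_sum_map :: "(nat \<times> nat) set \<Rightarrow> (nat \<times> nat \<Rightarrow> real) \<Rightarrow> nat \<times> nat \<Rightarrow> real" where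
  "corner_sum_map P x = (\<lambda>(i, j). if (i, j) \<in> P then corner_sum x i j else 0)"

lemma linear_corner_sum_map: "linear (corner_sum_map P)"
  by (rule linearI) (simp_all add: corner_sum_map_def corner_sum_add corner_sum_scaleR fun_eq_iff)

lemma corner_sum_map_RI: "corner_sum_map P x \<in> RI P"
  unfolding corner_sum_map_def RI_def by auto

section \<open>Partitions between la and nu as upsets of the skew shape\<close>

lemma partition_antimono:
  assumes "is_partition \<mu>" "1 \<le> i" "i \<le> k"
  shows "\<mu> k \<le> \<mu> i"
  using assms(3)
proof (induction k rule: dec_induct)
  case (step k)
  then show ?case
    using assms(1,2) unfolding is_partition_def by (meson le_trans order.trans)
qed simp

lemma skew_cells_upset:
  assumes "is_partition \<mu>" "part_le la \<mu>"
  shows "upset (skew_cells \<nu> la) pos_le (skew_cells \<nu> \<mu>)"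
  unfolding upset_def
proof (intro conjI subsetI ballI impI)
  fix p assume "p \<in> skew_cells \<nu> \<mu>"
  moreover obtain i j where "p = (i, j)"
    by fastforce
  ultimately have "1 \<le> i" "1 \<le> j" "j \<le> \<nu> i" "\<mu> i < j"
    unfolding skew_cells_def by auto
  moreover have "la i \<le> \<mu> i"
    using assms(2) \<open>1 \<le> i\<close> unfolding part_le_def by blast
  ultimately show "p \<in> skew_cells \<nu> la"
    using \<open>p = (i, j)\<close> unfolding skew_cells_def by simp
next
  fix p q assume "p \<in> skew_cells \<nu> \<mu>" "q \<in> skew_cells \<nu> la" "pos_le p q"
  moreover obtain i j i' j' where "p = (i, j)" "q = (i', j')"
    by fastforce
  ultimately have "1 \<le> i" "\<mu> i < j" "i \<le> i'" "j \<le> j'" "1 \<le> i'" "j' \<le> \<nu> i'"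
    unfolding skew_cells_def pos_le_def by auto
  moreover have "\<mu> i' \<le> \<mu> i"
    using partition_antimono[OF assms(1)] calculation by blast
  ultimately show "q \<in> skew_cells \<nu> \<mu>"
    using \<open>q = (i', j')\<close> unfolding skew_cells_def by simp
qed

text \<open>For a down-set \<open>C\<close> of the skew shape \<open>\<nu>/la\<close>, \<open>add_cells la C\<close> is the partition whose
  diagram is that of \<open>la\<close> together with the cells in \<open>C\<close>.\<close>

definition add_cells :: "(nat \<Rightarrow> nat) \<Rightarrow> (nat \<times> nat) set \<Rightarrow> nat \<Rightarrow> nat" where
  "add_cells la C i = (if i = 0 then 0 else Max (insert (la i) {j. (i, j) \<in> C}))"

lemma add_cells_row:
  assumes "C \<subseteq> skew_cells \<nu> la" "1 \<le> i"
  shows "la i \<le> add_cells la C i"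
    and "(i, j) \<in> C \<Longrightarrow> j \<le> add_cells la C i"
    and "add_cells la C i = la i \<or> (i, add_cells la C i) \<in> C"
proof -
  have "{j. (i, j) \<in> C} \<subseteq> {..\<nu> i}"
    using assms(1) unfolding skew_cells_def by auto
  then have fin: "finite (insert (la i) {j. (i, j) \<in> C})"
    by (simp add: finite_subset)
  show "la i \<le> add_cells la C i"
    using fin assms(2) unfolding add_cells_def by simp
  show "(i, j) \<in> C \<Longrightarrow> j \<le> add_cells la C i"
    using fin assms(2) unfolding add_cells_def by simp
  have "Max (insert (la i) {j. (i, j) \<in> C}) \<in> insert (la i) {j. (i, j) \<in> C}"
    using fin by (rule Max_in) simp
  then show "add_cells la C i = la i \<or> (i, add_cells la C i) \<in> C"
    using assms(2) unfolding add_cells_def by auto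
qed

lemma add_cells_le:
  assumes "part_le la \<nu>" "C \<subseteq> skew_cells \<nu> la" "1 \<le> i"
  shows "add_cells la C i \<le> \<nu> i"
  using add_cells_row(3)[OF assms(2,3)] assms unfolding part_le_def skew_cells_def by auto

lemma add_cells_Suc_le:
  assumes la: "is_partition la" and nu: "is_partition \<nu>"
    and C: "C \<subseteq> skew_cells \<nu> la"
    and rest: "upset (skew_cells \<nu> la) pos_le (skew_cells \<nu> la - C)"
    and "1 \<le> i"
  shows "add_cells la C (Suc i) \<le> add_cells la C i"
proof -
  let ?P = "skew_cells \<nu> la" and ?\<mu> = "add_cells la C"
  note row = add_cells_row[OF C]
  consider "?\<mu> (Suc i) = la (Suc i)" | "(Suc i, ?\<mu> (Suc i)) \<in> C"
    using row(3)[of "Suc i"] by auto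
  then show ?thesis
  proof cases
    case 1
    moreover have "la (Suc i) \<le> la i"
      using la \<open>1 \<le> i\<close> unfolding is_partition_def by simp
    ultimately show ?thesis
      using row(1)[OF \<open>1 \<le> i\<close>] by linarith
  next
    case 2
    define j where "j = ?\<mu> (Suc i)"
    show ?thesis
    proof (cases "j \<le> la i")
      case True
      then show ?thesis
        using row(1)[OF \<open>1 \<le> i\<close>] unfolding j_def by linarith
    next
      case False
      have "(Suc i, j) \<in> ?P"
        using C 2 unfolding j_def by blast
      moreover have "\<nu> (Suc i) \<le> \<nu> i"
        using nu \<open>1 \<le> i\<close> unfolding is_partition_def by simp
      ultimately have "(i, j) \<in> ?P"
        using False \<open>1 \<le> i\<close> unfolding skew_cells_def by auto
      have "(i, j) \<in> C"
      proof (rule ccontr)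
        assume "(i, j) \<notin> C"
        then have "(Suc i, j) \<in> ?P - C"
          using rest \<open>(i, j) \<in> ?P\<close> \<open>(Suc i, j) \<in> ?P\<close> unfolding upset_def pos_le_def by auto
        with 2 show False
          unfolding j_def by blast
      qed
      then show ?thesis
        using row(2)[OF \<open>1 \<le> i\<close>] unfolding j_def by blast
    qed
  qed
qed

lemma add_cells_partition:
  assumes la: "is_partition la" and nu: "is_partition \<nu>" "part_le la \<nu>"
    and C: "C \<subseteq> skew_cells \<nu> la"
    and rest: "upset (skew_cells \<nu> la) pos_le (skew_cells \<nu> la - C)"
  shows "is_partition (add_cells la C)" "part_le la (add_cells la C)" "part_le (add_cells la C) \<nu>"
proof -
  let ?\<mu> = "add_cells la C"
  show "part_le la ?\<mu>"
    using add_cells_row(1)[OF C] unfolding part_le_def by blast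
  show "part_le ?\<mu> \<nu>"
    using add_cells_le[OF nu(2) C] unfolding part_le_def by blast
  have "\<nu> i \<noteq> 0" if "?\<mu> i \<noteq> 0" for i
  proof -
    have "1 \<le> i"
      using that by (cases i) (simp_all add: add_cells_def)
    with add_cells_le[OF nu(2) C] that show ?thesis
      by (metis le_zero_eq)
  qed
  then have "finite {i. ?\<mu> i \<noteq> 0}"
    using nu(1) finite_subset[of "{i. ?\<mu> i \<noteq> 0}" "{i. \<nu> i \<noteq> 0}"]
    unfolding is_partition_def by blast
  moreover have "?\<mu> 0 = 0"
    by (simp add: add_cells_def)
  ultimately show "is_partition ?\<mu>"
    using add_cells_Suc_le[OF la nu(1) C rest] unfolding is_partition_def by blast
qed

lemma skew_cells_add_cells:
  assumes C: "C \<subseteq> skew_cells \<nu> la"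
    and rest: "upset (skew_cells \<nu> la) pos_le (skew_cells \<nu> la - C)"
  shows "skew_cells \<nu> (add_cells la C) = skew_cells \<nu> la - C"
proof -
  let ?P = "skew_cells \<nu> la" and ?\<mu> = "add_cells la C"
  note row = add_cells_row[OF C]
  have "(i, j) \<in> skew_cells \<nu> ?\<mu> \<longleftrightarrow> (i, j) \<in> ?P - C" for i j
  proof
    assume ij: "(i, j) \<in> skew_cells \<nu> ?\<mu>"
    then have "1 \<le> i" "?\<mu> i < j"
      unfolding skew_cells_def by auto
    then have "(i, j) \<in> ?P"
      using ij row(1)[of i] unfolding skew_cells_def by auto
    moreover have "(i, j) \<notin> C"
      using row(2)[OF \<open>1 \<le> i\<close>, of j] \<open>?\<mu> i < j\<close> by linarith
    ultimately show "(i, j) \<in> ?P - C"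
      by blast
  next
    assume ij: "(i, j) \<in> ?P - C"
    then have "1 \<le> i" "la i < j"
      unfolding skew_cells_def by auto
    have "\<not> j \<le> ?\<mu> i"
    proof
      assume "j \<le> ?\<mu> i"
      from row(3)[OF \<open>1 \<le> i\<close>] show False
      proof
        assume "?\<mu> i = la i"
        with \<open>j \<le> ?\<mu> i\<close> \<open>la i < j\<close> show False
          by linarith
      next
        assume "(i, ?\<mu> i) \<in> C"
        then have "(i, ?\<mu> i) \<in> ?P - C"
          using rest ij C \<open>j \<le> ?\<mu> i\<close> unfolding upset_def pos_le_def by auto
        with \<open>(i, ?\<mu> i) \<in> C\<close> show False
          by blast
      qed
    qed
    with ij show "(i, j) \<in> skew_cells \<nu> ?\<mu>"
      unfolding skew_cells_def by auto
  qed
  then show ?thesis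
    by auto
qed

lemma upset_skew_cells_iff:
  assumes "is_partition la" "is_partition \<nu>" "part_le la \<nu>"
  shows "upset (skew_cells \<nu> la) pos_le U \<longleftrightarrow>
    (\<exists>\<mu>. is_partition \<mu> \<and> part_le la \<mu> \<and> part_le \<mu> \<nu> \<and> U = skew_cells \<nu> \<mu>)"
proof
  assume U: "upset (skew_cells \<nu> la) pos_le U"
  let ?C = "skew_cells \<nu> la - U"
  have "?C \<subseteq> skew_cells \<nu> la" and U_eq: "U = skew_cells \<nu> la - ?C"
    using U unfolding upset_def by auto
  moreover have "upset (skew_cells \<nu> la) pos_le (skew_cells \<nu> la - ?C)"
    using U U_eq by simp
  ultimately show "\<exists>\<mu>. is_partition \<mu> \<and> part_le la \<mu> \<and> part_le \<mu> \<nu> \<and> U = skew_cells \<nu> \<mu>"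
    using add_cells_partition[OF assms] skew_cells_add_cells by metis
next
  assume "\<exists>\<mu>. is_partition \<mu> \<and> part_le la \<mu> \<and> part_le \<mu> \<nu> \<and> U = skew_cells \<nu> \<mu>"
  then show "upset (skew_cells \<nu> la) pos_le U"
    using skew_cells_upset by blast
qed

lemma column_sum_Mmat:
  assumes "is_partition \<mu>" "\<mu> 1 < n" "1 \<le> i" "i \<le> m" "j \<le> n"
  shows "(\<Sum>i'=1..i. Mmat \<mu> m n (i', j)) = of_bool (j = \<mu> i + 1)"
  using assms(3,4)
proof (induction i rule: dec_induct)
  case base
  then show ?case
    using assms(2) unfolding Mmat_def by (auto simp: sum.cl_ivl_Suc)
next
  case (step k)
  have "\<mu> (Suc k) \<le> \<mu> k" "\<mu> k < n"
    using assms(1,2) step.hyps partition_antimono[OF assms(1), of 1 k]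
    unfolding is_partition_def by auto
  then have "Mmat \<mu> m n (Suc k, j) = of_bool (j = \<mu> (Suc k) + 1) - of_bool (j = \<mu> k + 1)"
    using step.hyps step.prems assms(5) unfolding Mmat_def by auto
  with step.IH step.prems show ?case
    by (simp add: sum.cl_ivl_Suc)
qed

lemma corner_sum_Mmat:
  assumes "is_partition \<mu>" "\<mu> 1 < n" "1 \<le> i" "i \<le> m" "j \<le> n"
  shows "corner_sum (Mmat \<mu> m n) i j = of_bool (\<mu> i < j)"
proof -
  have "corner_sum (Mmat \<mu> m n) i j = (\<Sum>j'=1..j. \<Sum>i'=1..i. Mmat \<mu> m n (i', j'))"
    unfolding corner_sum_def by (rule sum.swap)
  also have "\<dots> = (\<Sum>j'=1..j. of_bool (j' = \<mu> i + 1))"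
    using column_sum_Mmat[OF assms(1-4)] assms(5) by simp
  also have "\<dots> = of_bool (\<mu> i < j)"
    by (simp add: sum.delta)
  finally show ?thesis .
qed

lemma Mmat_RI: "Mmat \<mu> m n \<in> RI ({1..m} \<times> {1..n})"
  unfolding Mmat_def RI_def by auto

locale skew_shape_in_box =
  fixes m n :: nat and la \<nu> :: "nat \<Rightarrow> nat"
  assumes n_pos: "1 \<le> n"
    and partition_la: "is_partition la" and partition_nu: "is_partition \<nu>"
    and la_le_nu: "part_le la \<nu>" and nu_in_box: "in_box \<nu> (n - 1) (m - 1)"
begin

abbreviation shape :: "(nat \<times> nat) set" where
  "shape \<equiv> skew_cells \<nu> la"

definition vertices :: "(nat \<times> nat \<Rightarrow> real) set" where
  "vertices = {Mmat \<mu> m n | \<mu>. is_partition \<mu> \<and> part_le la \<mu> \<and> part_le \<mu> \<nu>}"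

lemma PASM_eq_convex_hull: "PASM \<nu> la m n = convex hull vertices"
  unfolding PASM_def vertices_def conv_hull_eq_convex_hull ..

lemma aff_hull_PASM: "aff_hull (PASM \<nu> la m n) = affine hull vertices"
  by (simp add: PASM_eq_convex_hull aff_hull_eq_affine_hull)

lemma first_part_less:
  assumes "part_le \<mu> \<nu>"
  shows "\<mu> 1 < n"
proof -
  have "\<mu> 1 \<le> \<nu> 1"
    using assms unfolding part_le_def by simp
  also have "\<nu> 1 \<le> n - 1"
    using nu_in_box unfolding in_box_def by simp
  finally show ?thesis
    using n_pos by linarith
qed

lemma shape_subset_box: "shape \<subseteq> {1..m} \<times> {1..n}"
proof
  fix p assume "p \<in> shape"
  moreover obtain i j where "p = (i, j)"
    by fastforce
  ultimately have "1 \<le> i" "1 \<le> j" "j \<le> \<nu> i"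
    unfolding skew_cells_def by auto
  moreover have "\<not> m - 1 < i"
    using nu_in_box \<open>1 \<le> j\<close> \<open>j \<le> \<nu> i\<close> unfolding in_box_def by force
  moreover have "\<nu> i \<le> n - 1"
    using nu_in_box \<open>1 \<le> i\<close> unfolding in_box_def by blast
  ultimately show "p \<in> {1..m} \<times> {1..n}"
    using \<open>p = (i, j)\<close> by auto
qed

lemma finite_shape: "finite shape"
  using shape_subset_box by (rule finite_subset) simp

lemma corner_sum_map_Mmat:
  assumes "is_partition \<mu>" "part_le la \<mu>" "part_le \<mu> \<nu>"
  shows "corner_sum_map shape (Mmat \<mu> m n) = indicator (skew_cells \<nu> \<mu>)"
proof
  fix p :: "nat \<times> nat"
  obtain i j where p: "p = (i, j)"
    by fastforce
  show "corner_sum_map shape (Mmat \<mu> m n) p = indicator (skew_cells \<nu> \<mu>) p"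
  proof (cases "p \<in> shape")
    case True
    then have "1 \<le> i" "i \<le> m" "j \<le> n"
      using shape_subset_box p by auto
    then have "corner_sum (Mmat \<mu> m n) i j = of_bool (\<mu> i < j)"
      using corner_sum_Mmat[OF assms(1) first_part_less[OF assms(3)]] by blast
    with True p show ?thesis
      unfolding corner_sum_map_def skew_cells_def indicator_def by auto
  next
    case False
    moreover have "skew_cells \<nu> \<mu> \<subseteq> shape"
      using skew_cells_upset[OF assms(1,2)] unfolding upset_def by blast
    ultimately show ?thesis
      using p unfolding corner_sum_map_def indicator_def by auto
  qed
qed

lemma corner_sum_map_vertices:
  "corner_sum_map shape ` vertices = {indicator U | U. upset shape pos_le U}"
proof -
  let ?M = "{\<mu>. is_partition \<mu> \<and> part_le la \<mu> \<and> part_le \<mu> \<nu>}"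
  have "vertices = (\<lambda>\<mu>. Mmat \<mu> m n) ` ?M"
    unfolding vertices_def by blast
  then have "corner_sum_map shape ` vertices = (\<lambda>\<mu>. corner_sum_map shape (Mmat \<mu> m n)) ` ?M"
    by (simp add: image_image)
  also have "\<dots> = (\<lambda>\<mu>. indicator (skew_cells \<nu> \<mu>)) ` ?M"
    using corner_sum_map_Mmat by (intro image_cong) auto
  also have "\<dots> = {indicator U | U. upset shape pos_le U}"
    using upset_skew_cells_iff[OF partition_la partition_nu la_le_nu] by auto
  finally show ?thesis .
qed

lemma corner_sum_map_PASM: "corner_sum_map shape ` PASM \<nu> la m n = order_polytope shape pos_le"
  unfolding PASM_eq_convex_hull convex_hull_linear_image[OF linear_corner_sum_map]
    corner_sum_map_vertices order_polytope_eq_convex_hull[OF finite_shape] ..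

lemma corner_sum_outside_shape:
  assumes "x \<in> aff_hull (PASM \<nu> la m n)" "1 \<le> i" "i \<le> m" "j \<le> n" "(i, j) \<notin> shape"
  shows "corner_sum x i j = of_bool (la i < j)"
proof -
  have "corner_sum v i j = of_bool (la i < j)" if v: "v \<in> vertices" for v
  proof -
    obtain \<mu> where \<mu>: "is_partition \<mu>" "part_le la \<mu>" "part_le \<mu> \<nu>" "v = Mmat \<mu> m n"
      using v unfolding vertices_def by blast
    then have "corner_sum v i j = of_bool (\<mu> i < j)"
      using corner_sum_Mmat[OF \<mu>(1) first_part_less[OF \<mu>(3)]] assms(2-4) by simp
    moreover have "la i \<le> \<mu> i" "\<mu> i \<le> \<nu> i"
      using \<mu>(2,3) assms(2) unfolding part_le_def by auto
    moreover have "j \<le> la i \<or> \<nu> i < j"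
      using assms(2,5) \<mu>(2,3) unfolding skew_cells_def by auto
    ultimately show ?thesis
      by auto
  qed
  then have "vertices \<subseteq> (\<lambda>x. corner_sum x i j) -` {of_bool (la i < j)}"
    by blast
  then have "affine hull vertices \<subseteq> (\<lambda>x. corner_sum x i j) -` {of_bool (la i < j)}"
    by (rule hull_minimal) (rule affine_linear_vimage[OF linear_corner_sum affine_sing])
  with assms(1) show ?thesis
    unfolding aff_hull_PASM by blast
qed

lemma corner_sum_by_corner_sum_map:
  assumes "x \<in> aff_hull (PASM \<nu> la m n)" "i \<le> m" "j \<le> n"
  shows "corner_sum x i j =
    (if i = 0 then 0 else if (i, j) \<in> shape then corner_sum_map shape x (i, j) else of_bool (la i < j))"
  using corner_sum_outside_shape[OF assms(1) _ assms(2,3)] unfolding corner_sum_map_def by auto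

lemma aff_hull_PASM_subset_RI: "aff_hull (PASM \<nu> la m n) \<subseteq> RI ({1..m} \<times> {1..n})"
  unfolding aff_hull_PASM
proof (rule hull_minimal)
  show "vertices \<subseteq> RI ({1..m} \<times> {1..n})"
    unfolding vertices_def using Mmat_RI by blast
qed (rule affine_RI)

lemma inj_on_corner_sum_map: "inj_on (corner_sum_map shape) (aff_hull (PASM \<nu> la m n))"
proof (rule inj_onI)
  fix x y
  assume x: "x \<in> aff_hull (PASM \<nu> la m n)" and y: "y \<in> aff_hull (PASM \<nu> la m n)"
    and eq: "corner_sum_map shape x = corner_sum_map shape y"
  show "x = y"
    using x y aff_hull_PASM_subset_RI
  proof (intro RI_box_eqI)
    fix i j assume "i \<le> m" "j \<le> n"
    then show "corner_sum x i j = corner_sum y i j"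
      using corner_sum_by_corner_sum_map[OF x] corner_sum_by_corner_sum_map[OF y] eq by simp
  qed auto
qed

lemma ZI_iff_corner_sum_map_ZI:
  assumes x: "x \<in> aff_hull (PASM \<nu> la m n)"
  shows "x \<in> ZI ({1..m} \<times> {1..n}) \<longleftrightarrow> corner_sum_map shape x \<in> ZI shape"
proof
  assume "x \<in> ZI ({1..m} \<times> {1..n})"
  then have "corner_sum x i j \<in> \<int>" for i j
    unfolding ZI_def by (intro corner_sum_Ints) blast
  then show "corner_sum_map shape x \<in> ZI shape"
    using corner_sum_map_RI unfolding ZI_def corner_sum_map_def by auto
next
  assume Ints: "corner_sum_map shape x \<in> ZI shape"
  show "x \<in> ZI ({1..m} \<times> {1..n})"
  proof (rule ZI_boxI)
    show "x \<in> RI ({1..m} \<times> {1..n})"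
      using x aff_hull_PASM_subset_RI by blast
    fix i j assume "i \<le> m" "j \<le> n"
    then show "corner_sum x i j \<in> \<int>"
      using corner_sum_by_corner_sum_map[OF x] Ints unfolding ZI_def by simp
  qed
qed

end

theorem theorem3:
  fixes m n :: nat and la \<nu> :: "nat \<Rightarrow> nat"
  assumes "m \<ge> 1" and "n \<ge> 1"
    and "is_partition la" and "is_partition \<nu>"
    and "part_le la \<nu>" and "in_box \<nu> (n - 1) (m - 1)"
  shows "integrally_equivalent ({1..m} \<times> {1..n}) (PASM \<nu> la m n)
           (skew_cells \<nu> la) (order_polytope (skew_cells \<nu> la) pos_le)"
proof -
  interpret skew_shape_in_box m n la \<nu>
    using assms(2-) by unfold_locales
  show ?thesis
  proof (rule integrally_equivalentI)
    show "linear (corner_sum_map (skew_cells \<nu> la))"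
      by (rule linear_corner_sum_map)
    show "\<And>x. corner_sum_map (skew_cells \<nu> la) x \<in> RI (skew_cells \<nu> la)"
      by (rule corner_sum_map_RI)
    show "inj_on (corner_sum_map (skew_cells \<nu> la)) (aff_hull (PASM \<nu> la m n))"
      by (rule inj_on_corner_sum_map)
    show "corner_sum_map (skew_cells \<nu> la) ` PASM \<nu> la m n = order_polytope (skew_cells \<nu> la) pos_le"
      by (rule corner_sum_map_PASM)
    show "\<And>x. x \<in> aff_hull (PASM \<nu> la m n) \<Longrightarrow>
        x \<in> ZI ({1..m} \<times> {1..n}) \<longleftrightarrow> corner_sum_map (skew_cells \<nu> la) x \<in> ZI (skew_cells \<nu> la)"
      by (rule ZI_iff_corner_sum_map_ZI)
  qed
qed

end
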